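(* For every metric space $X$, either $h_\infty(X)=0$ or $h_\infty(X)=\infty$. Consequently the coarse entropy of any isometric embedding $f\colon X\to X$ is either $0$ or $\infty$.
   Context: For a map $f\colon X\to X$ on a metric space $(X,d)$, $\delta>0$, $n\in\mathbb N$, $x_0\in X$: a $\delta$-pseudoorbit of $f$ of length $n$ from $x_0$ is $(x_0,\dots,x_n)$ with $d(f(x_i),x_{i+1})\le\delta$ for all $i<n$; $P(f,n,\delta,x_0)$ is the set of these with distance $\max_i d(x_i,y_i)$; $s(f,n,R,\delta,x_0)$ is the supremum of cardinalities of $R$-separated subsets (distinct elements at distance $\ge R$) of $P(f,n,\delta,x_0)$; $h_\infty(f)=\lim_{\delta\to\infty}\lim_{R\to\infty}\limsup_{n\to\infty}\frac1n\log s(f,n,R,\delta,x_0)\in[0,\infty]$, independent of $x_0$. The coarse entropy of the space is $h_\infty(X)=h_\infty(\mathrm{id}_X)$, which equals $h_\infty(f)$ for every isometric embedding $f\colon X\to X$. *)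

theory Defs
  imports "HOL-Analysis.Analysis"
begin

definition pseudoorbits :: "('a::metric_space \<Rightarrow> 'a) \<Rightarrow> nat \<Rightarrow> real \<Rightarrow> 'a \<Rightarrow> 'a list set" where
  "pseudoorbits f n \<delta> x0 =
     {xs. length xs = Suc n \<and> xs ! 0 = x0 \<and> (\<forall>i<n. dist (f (xs ! i)) (xs ! Suc i) \<le> \<delta>)}"

definition orbit_dist :: "'a::metric_space list \<Rightarrow> 'a list \<Rightarrow> real" where
  "orbit_dist xs ys = Max {dist (xs ! i) (ys ! i) | i. i < length xs}"

definition separated :: "real \<Rightarrow> 'a::metric_space list set \<Rightarrow> bool" where
  "separated R S \<longleftrightarrow> (\<forall>x\<in>S. \<forall>y\<in>S. x \<noteq> y \<longrightarrow> orbit_dist x y \<ge> R)"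

text \<open>supremum of cardinalities of R-separated subsets of P(f,n,delta,x0), in [0,infinity].
  (Infinite separated sets are accounted for by their finite subsets.)\<close>
definition sep_num :: "('a::metric_space \<Rightarrow> 'a) \<Rightarrow> nat \<Rightarrow> real \<Rightarrow> real \<Rightarrow> 'a \<Rightarrow> ereal" where
  "sep_num f n R \<delta> x0 =
     (SUP S \<in> {S. finite S \<and> S \<subseteq> pseudoorbits f n \<delta> x0 \<and> separated R S}. ereal (real (card S)))"

definition ln_ereal :: "ereal \<Rightarrow> ereal" where
  "ln_ereal x = (if x = \<infinity> then \<infinity> else ereal (ln (real_of_ereal x)))"

definition coarse_entropy :: "('a::metric_space \<Rightarrow> 'a) \<Rightarrow> 'a \<Rightarrow> ereal" where
  "coarse_entropy f x0 =
     Lim at_top (\<lambda>\<delta>::real. Lim at_top (\<lambda>R::real.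
        limsup (\<lambda>n::nat. ereal (1 / real n) * ln_ereal (sep_num f n R \<delta> x0))))"

definition space_coarse_entropy :: "'a::metric_space \<Rightarrow> ereal" where
  "space_coarse_entropy x0 = coarse_entropy id x0"

end

theory Submission
  imports Defs
begin

text \<open>Write \<open>h\<^sub>\<delta>\<close> for the infimum over \<open>R\<close> of the growth rate of \<open>R\<close>-separated sets of
  \<open>\<delta>\<close>-pseudoorbits, so that the coarse entropy is \<open>sup\<^sub>\<delta> h\<^sub>\<delta>\<close>. For the identity, keeping every
  \<open>k\<close>-th point of a \<open>\<delta>\<close>-pseudoorbit yields a \<open>k\<delta>\<close>-pseudoorbit that is \<open>k\<close> times shorter, so
  \<open>k h\<^sub>\<delta> \<le> h\<^sub>k\<^sub>\<delta>\<close>: either every \<open>h\<^sub>\<delta>\<close> vanishes or the supremum is infinite. For an isometric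
  embedding \<open>f\<close>, pseudoorbits of \<open>f\<close> and of the identity can be converted into each other
  isometrically at the cost of doubling the length, so the entropy of \<open>f\<close> lies between
  \<open>h(id)\<close> and \<open>2 h(id)\<close>.\<close>

lemma Lim_at_top_mono:
  fixes g :: "'a::linorder \<Rightarrow> 'b::{complete_linorder,linorder_topology}"
  assumes "mono g"
  shows "Lim at_top g = (SUP x. g x)"
  by (intro tendsto_Lim increasing_tendsto)
    (auto simp: SUP_upper less_SUP_iff eventually_at_top_linorder
      intro: less_le_trans monoD[OF assms])

lemma Lim_at_top_antimono:
  fixes g :: "'a::linorder \<Rightarrow> 'b::{complete_linorder,linorder_topology}"
  assumes "antimono g"
  shows "Lim at_top g = (INF x. g x)"
  by (intro tendsto_Lim decreasing_tendsto)
    (auto simp: INF_lower INF_less_iff eventually_at_top_linorder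
      intro: le_less_trans antimonoD[OF assms])

lemma INF_ereal_mult_left:
  assumes "0 < c"
  shows "(INF x\<in>A. ereal c * g x) = ereal c * (INF x\<in>A. g x)"
  using ereal_Inf_cmult[OF assms, of "\<lambda>y. y \<in> g ` A"]
  by (simp add: image_image setcompr_eq_image)

lemma Limsup_compose_filterlim_le:
  fixes a :: "'b \<Rightarrow> 'c::complete_linorder"
  assumes "filterlim \<phi> G F"
  shows "Limsup F (\<lambda>x. a (\<phi> x)) \<le> Limsup G a"
  unfolding Limsup_le_iff
proof (intro allI impI)
  fix y assume "Limsup G a < y"
  then have "\<forall>\<^sub>F z in G. a z < y" using Limsup_le_iff[where X=a and F=G] by blast
  then show "\<forall>\<^sub>F x in F. a (\<phi> x) < y"
    by (rule filterlim_iff[THEN iffD1, OF assms, rule_format])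
qed

lemma limsup_rescaled_le:
  fixes a b :: "nat \<Rightarrow> ereal"
  assumes b_nonneg: "\<And>n. 0 \<le> b n" and a_le: "\<And>m. a m \<le> b (\<phi> m)"
    and \<phi>_lim: "filterlim \<phi> sequentially sequentially"
    and \<phi>_le: "\<And>m. real (\<phi> m) \<le> c * real m + d" and "0 < c"
  shows "limsup (\<lambda>m. ereal (1 / real m) * a m) \<le> ereal c * limsup (\<lambda>n. ereal (1 / real n) * b n)"
proof -
  let ?u = "\<lambda>m. ereal (1 / real (\<phi> m)) * b (\<phi> m)"
  have "\<forall>\<^sub>F m in sequentially. ereal (1 / real m) * a m \<le> ereal (c + d / real m) * ?u m"
    using eventually_ge_at_top[of 1] \<phi>_lim[unfolded filterlim_at_top, rule_format, of 1]
  proof eventually_elim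
    case (elim m)
    have "ereal (1 / real m) * a m \<le> ereal (1 / real m) * b (\<phi> m)"
      by (intro ereal_mult_left_mono a_le) simp
    also have "\<dots> = ereal (real (\<phi> m) / real m) * ?u m"
      using elim by (simp add: mult.assoc[symmetric])
    also have "\<dots> \<le> ereal (c + d / real m) * ?u m"
      using elim \<phi>_le[of m] b_nonneg[of "\<phi> m"]
      by (intro ereal_mult_right_mono) (auto simp: field_simps)
    finally show ?case .
  qed
  then have "limsup (\<lambda>m. ereal (1 / real m) * a m) \<le> limsup (\<lambda>m. ereal (c + d / real m) * ?u m)"
    by (rule Limsup_mono)
  also have "\<dots> = ereal c * limsup ?u"
  proof (rule ereal_limsup_lim_mult)
    have "(\<lambda>m. c + d / real m) \<longlonglongrightarrow> c + 0"
      by (intro tendsto_add tendsto_const tendsto_divide_0[OF tendsto_const]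
          filterlim_at_top_imp_at_infinity filterlim_real_sequentially)
    then show "(\<lambda>m. ereal (c + d / real m)) \<longlonglongrightarrow> ereal c" by simp
  qed (use \<open>0 < c\<close> in auto)
  also have "\<dots> \<le> ereal c * limsup (\<lambda>n. ereal (1 / real n) * b n)"
    using \<open>0 < c\<close> by (intro ereal_mult_left_mono Limsup_compose_filterlim_le \<phi>_lim) auto
  finally show ?thesis .
qed

lemma ereal_infinite_if_multiples_le:
  fixes x y :: ereal
  assumes "0 < x" and le: "\<And>k::nat. ereal (real k) * x \<le> y"
  shows "y = \<infinity>"
proof (cases x)
  case (real r)
  show ?thesis
  proof (rule ccontr)
    assume "y \<noteq> \<infinity>"
    moreover have "0 \<le> y" using le[of 0] by (simp flip: zero_ereal_def)
    ultimately obtain t where "y = ereal t" by (cases y) auto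
    moreover obtain k where "t < real k * r" using ex_less_of_nat_mult \<open>0 < x\<close> real by auto
    ultimately show False using le[of k] real by simp
  qed
qed (use assms le[of 1] in auto)

lemma dist_nth_le_orbit_dist:
  "i < length xs \<Longrightarrow> dist (xs ! i) (ys ! i) \<le> orbit_dist xs ys"
  unfolding orbit_dist_def by (rule Max_ge) auto

lemma orbit_dist_attained:
  assumes "0 < length xs"
  obtains i where "i < length xs" "orbit_dist xs ys = dist (xs ! i) (ys ! i)"
proof -
  have "orbit_dist xs ys \<in> {dist (xs ! i) (ys ! i) | i. i < length xs}"
    unfolding orbit_dist_def using assms by (intro Max_in) auto
  then show ?thesis using that by blast
qed

lemma orbit_dist_pos_iff:
  assumes "length xs = length ys" "0 < length xs"
  shows "0 < orbit_dist xs ys \<longleftrightarrow> xs \<noteq> ys"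
proof
  assume "0 < orbit_dist xs ys"
  then show "xs \<noteq> ys"
    using orbit_dist_attained[OF assms(2), of ys] by fastforce
next
  assume "xs \<noteq> ys"
  then obtain i where "i < length xs" "xs ! i \<noteq> ys ! i"
    using assms(1) nth_equalityI by blast
  then have "0 < dist (xs ! i) (ys ! i)" by simp
  then show "0 < orbit_dist xs ys"
    using dist_nth_le_orbit_dist[OF \<open>i < length xs\<close>, of ys] by linarith
qed

lemma orbit_dist_le_by_index:
  assumes "0 < length xs"
    and index: "\<And>i. i < length xs \<Longrightarrow> \<exists>j<length xs'. dist (xs ! i) (ys ! i) - c \<le> dist (xs' ! j) (ys' ! j)"
  shows "orbit_dist xs ys - c \<le> orbit_dist xs' ys'"
proof -
  obtain i where i: "i < length xs" "orbit_dist xs ys = dist (xs ! i) (ys ! i)"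
    using orbit_dist_attained[OF assms(1)] .
  then obtain j where "j < length xs'" "dist (xs ! i) (ys ! i) - c \<le> dist (xs' ! j) (ys' ! j)"
    using index by blast
  with i show ?thesis using dist_nth_le_orbit_dist[of j xs' ys'] by linarith
qed

lemma length_pseudoorbit: "xs \<in> pseudoorbits f n \<delta> x0 \<Longrightarrow> length xs = Suc n"
  by (simp add: pseudoorbits_def)

lemma map_in_pseudoorbits:
  assumes "h 0 = x0" "\<And>i. i < n \<Longrightarrow> dist (f (h i)) (h (Suc i)) \<le> \<delta>"
  shows "map h [0..<Suc n] \<in> pseudoorbits f n \<delta> x0"
  using assms by (simp add: pseudoorbits_def nth_map_upt del: upt_Suc)

text \<open>The last hypothesis makes the map injective on separated sets.\<close>
lemma sep_num_le_by_map:
  assumes maps: "\<And>xs. xs \<in> pseudoorbits f n \<delta> x0 \<Longrightarrow> g xs \<in> pseudoorbits f' n' \<delta>' x0'"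
    and index: "\<And>xs ys i. xs \<in> pseudoorbits f n \<delta> x0 \<Longrightarrow> ys \<in> pseudoorbits f n \<delta> x0 \<Longrightarrow> i \<le> n \<Longrightarrow>
      \<exists>j\<le>n'. dist (xs ! i) (ys ! i) - c \<le> dist (g xs ! j) (g ys ! j)"
    and "R' \<le> R - c" and "c \<le> 0 \<or> 0 < R'"
  shows "sep_num f n R \<delta> x0 \<le> sep_num f' n' R' \<delta>' x0'"
  unfolding sep_num_def
proof (rule SUP_least)
  let ?P = "pseudoorbits f n \<delta> x0"
  fix S assume "S \<in> {S. finite S \<and> S \<subseteq> ?P \<and> separated R S}"
  then have S: "finite S" "S \<subseteq> ?P" "separated R S" by auto
  have far: "g xs \<noteq> g ys \<and> R' \<le> orbit_dist (g xs) (g ys)" if "xs \<in> S" "ys \<in> S" "xs \<noteq> ys" for xs ys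
  proof -
    have xs: "xs \<in> ?P" and ys: "ys \<in> ?P" using that S(2) by auto
    have len: "length xs = Suc n" "length ys = Suc n" "length (g xs) = Suc n'" "length (g ys) = Suc n'"
      using xs ys maps[OF xs] maps[OF ys] by (simp_all add: length_pseudoorbit)
    have "orbit_dist xs ys - c \<le> orbit_dist (g xs) (g ys)"
      using index[OF xs ys] len by (intro orbit_dist_le_by_index) (auto simp: less_Suc_eq_le)
    moreover have "R \<le> orbit_dist xs ys" "0 < orbit_dist xs ys"
      using S(3) that len by (auto simp: separated_def orbit_dist_pos_iff)
    ultimately show ?thesis
      using assms(3,4) len by (auto simp: orbit_dist_pos_iff[symmetric])
  qed
  then have inj: "inj_on g S" by (meson inj_onI)
  have gS: "g ` S \<in> {S. finite S \<and> S \<subseteq> pseudoorbits f' n' \<delta>' x0' \<and> separated R' S}"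
    using S maps far unfolding separated_def by (auto, metis)
  show "ereal (real (card S)) \<le> (SUP S\<in>{S. finite S \<and> S \<subseteq> pseudoorbits f' n' \<delta>' x0' \<and> separated R' S}. ereal (real (card S)))"
    using SUP_upper[OF gS, of "\<lambda>S. ereal (real (card S))"] by (simp add: card_image[OF inj])
qed

lemma sep_num_anti_R: "R \<le> R' \<Longrightarrow> sep_num f n R' \<delta> x0 \<le> sep_num f n R \<delta> x0"
  by (rule sep_num_le_by_map[where g=id and c=0]) auto

lemma sep_num_mono_delta: "\<delta> \<le> \<delta>' \<Longrightarrow> sep_num f n R \<delta> x0 \<le> sep_num f n R \<delta>' x0"
  by (rule sep_num_le_by_map[where g=id and c=0]) (auto simp: pseudoorbits_def)

lemma sep_num_eq_0_or_ge_1: "sep_num f n R \<delta> x0 = 0 \<or> 1 \<le> sep_num f n R \<delta> x0"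
proof (cases "\<exists>S. finite S \<and> S \<subseteq> pseudoorbits f n \<delta> x0 \<and> separated R S \<and> S \<noteq> {}")
  case True
  then obtain S where S: "finite S \<and> S \<subseteq> pseudoorbits f n \<delta> x0 \<and> separated R S" "S \<noteq> {}"
    by blast
  then have "ereal 1 \<le> ereal (real (card S))" by (simp add: Suc_leI card_gt_0_iff)
  also have "\<dots> \<le> sep_num f n R \<delta> x0"
    unfolding sep_num_def using S(1) by (intro SUP_upper) auto
  finally show ?thesis by (simp add: one_ereal_def)
next
  case False
  then have "{S. finite S \<and> S \<subseteq> pseudoorbits f n \<delta> x0 \<and> separated R S} = {{}}"
    by (auto simp: separated_def)
  then show ?thesis unfolding sep_num_def by simp
qed

text \<open>\<open>ln_ereal\<close> sends the junk value \<open>ln 0 = 0\<close> to \<open>0\<close>, so it is monotone and nonnegative only on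
  \<open>{0} \<union> [1, \<infinity>]\<close>, which contains all values of \<open>sep_num\<close>.\<close>
lemma ln_ereal_sep_num_nonneg: "0 \<le> ln_ereal (sep_num f n R \<delta> x0)"
  using sep_num_eq_0_or_ge_1[of f n R \<delta> x0]
  by (cases "sep_num f n R \<delta> x0") (auto simp: ln_ereal_def)

lemma ln_ereal_sep_num_mono:
  assumes "sep_num f n R \<delta> x0 \<le> sep_num f' n' R' \<delta>' x0'"
  shows "ln_ereal (sep_num f n R \<delta> x0) \<le> ln_ereal (sep_num f' n' R' \<delta>' x0')"
  using assms sep_num_eq_0_or_ge_1[of f n R \<delta> x0] sep_num_eq_0_or_ge_1[of f' n' R' \<delta>' x0']
  by (cases "sep_num f n R \<delta> x0"; cases "sep_num f' n' R' \<delta>' x0'") (auto simp: ln_ereal_def)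

definition growth_rate :: "('a::metric_space \<Rightarrow> 'a) \<Rightarrow> 'a \<Rightarrow> real \<Rightarrow> real \<Rightarrow> ereal" where
  "growth_rate f x0 R \<delta> = limsup (\<lambda>n::nat. ereal (1 / real n) * ln_ereal (sep_num f n R \<delta> x0))"

definition entropy_at_scale :: "('a::metric_space \<Rightarrow> 'a) \<Rightarrow> 'a \<Rightarrow> real \<Rightarrow> ereal" where
  "entropy_at_scale f x0 \<delta> = (INF R. growth_rate f x0 R \<delta>)"

lemma growth_rate_le_reparam:
  assumes "\<And>m. sep_num f m R \<delta> x0 \<le> sep_num f' (\<phi> m) R' \<delta>' x0'"
    and "filterlim \<phi> sequentially sequentially"
    and "\<And>m. real (\<phi> m) \<le> c * real m + d" and "0 < c"
  shows "growth_rate f x0 R \<delta> \<le> ereal c * growth_rate f' x0' R' \<delta>'"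
  unfolding growth_rate_def using assms
  by (intro limsup_rescaled_le ln_ereal_sep_num_mono ln_ereal_sep_num_nonneg)

lemma growth_rate_mono:
  assumes "\<And>m. sep_num f m R \<delta> x0 \<le> sep_num f' m R' \<delta>' x0'"
  shows "growth_rate f x0 R \<delta> \<le> growth_rate f' x0' R' \<delta>'"
proof -
  have "growth_rate f x0 R \<delta> \<le> ereal 1 * growth_rate f' x0' R' \<delta>'"
    by (rule growth_rate_le_reparam[where \<phi>="\<lambda>m. m" and d=0]) (simp_all add: assms filterlim_ident)
  then show ?thesis by simp
qed

lemma growth_rate_nonneg: "0 \<le> growth_rate f x0 R \<delta>"
  unfolding growth_rate_def
  by (intro le_Limsup always_eventually allI ereal_0_le_mult ln_ereal_sep_num_nonneg) simp_all

lemma entropy_at_scale_nonneg: "0 \<le> entropy_at_scale f x0 \<delta>"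
  unfolding entropy_at_scale_def by (intro INF_greatest growth_rate_nonneg)

lemma entropy_at_scale_mono: "\<delta> \<le> \<delta>' \<Longrightarrow> entropy_at_scale f x0 \<delta> \<le> entropy_at_scale f x0 \<delta>'"
  unfolding entropy_at_scale_def
  by (intro INF_mono) (meson growth_rate_mono sep_num_mono_delta order_refl)

lemma coarse_entropy_eq_SUP: "coarse_entropy f x0 = (SUP \<delta>. entropy_at_scale f x0 \<delta>)"
proof -
  have "antimono (\<lambda>R. growth_rate f x0 R \<delta>)" for \<delta>
    by (intro antimonoI growth_rate_mono sep_num_anti_R)
  then have "(\<lambda>\<delta>. Lim at_top (\<lambda>R. growth_rate f x0 R \<delta>)) = entropy_at_scale f x0"
    by (simp add: fun_eq_iff entropy_at_scale_def Lim_at_top_antimono)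
  then have "coarse_entropy f x0 = Lim at_top (entropy_at_scale f x0)"
    by (simp add: coarse_entropy_def growth_rate_def)
  also have "\<dots> = (SUP \<delta>. entropy_at_scale f x0 \<delta>)"
    by (intro Lim_at_top_mono monoI entropy_at_scale_mono)
  finally show ?thesis .
qed

lemma coarse_entropy_nonneg: "0 \<le> coarse_entropy f x0"
  unfolding coarse_entropy_eq_SUP by (rule SUP_upper2[of 0]) (auto intro: entropy_at_scale_nonneg)

lemma pseudoorbit_id_dist_le:
  assumes "xs \<in> pseudoorbits id n \<delta> x0" "a \<le> b" "b \<le> n"
  shows "dist (xs ! a) (xs ! b) \<le> real (b - a) * \<delta>"
  using assms(2,3)
proof (induction b rule: dec_induct)
  case (step b)
  have "dist (xs ! a) (xs ! Suc b) \<le> dist (xs ! a) (xs ! b) + dist (xs ! b) (xs ! Suc b)"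
    by (rule dist_triangle)
  also have "dist (xs ! b) (xs ! Suc b) \<le> \<delta>"
    using assms(1) step by (auto simp: pseudoorbits_def)
  finally show ?case using step by (simp add: Suc_diff_le algebra_simps)
qed simp

lemma pseudoorbit_id_dist_le_mult:
  assumes "xs \<in> pseudoorbits id n \<delta> x0" "0 \<le> \<delta>" "a \<le> b" "b \<le> n" "b - a \<le> k"
  shows "dist (xs ! a) (xs ! b) \<le> real k * \<delta>"
proof -
  have "dist (xs ! a) (xs ! b) \<le> real (b - a) * \<delta>"
    using assms(1,3,4) by (rule pseudoorbit_id_dist_le)
  also have "\<dots> \<le> real k * \<delta>" using assms(2,5) by (intro mult_right_mono) auto
  finally show ?thesis .
qed

text \<open>Keep every \<open>k\<close>-th point; the separation lost, \<open>2 k \<delta>\<close>, comes from moving back at most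
  \<open>k\<close> steps to the last sampled point in both pseudoorbits.\<close>
lemma sep_num_id_sample:
  assumes "0 \<le> \<delta>" "1 \<le> k" "0 < R"
  shows "sep_num id m (R + 2 * real k * \<delta>) \<delta> x0 \<le> sep_num id (m div k + 1) R (real k * \<delta>) x0"
proof (rule sep_num_le_by_map[where g="\<lambda>xs. map (\<lambda>j. xs ! min (k * j) m) [0..<Suc (m div k + 1)]"
      and c="2 * real k * \<delta>"])
  fix xs assume xs: "xs \<in> pseudoorbits id m \<delta> x0"
  show "map (\<lambda>j. xs ! min (k * j) m) [0..<Suc (m div k + 1)] \<in> pseudoorbits id (m div k + 1) (real k * \<delta>) x0"
  proof (rule map_in_pseudoorbits)
    show "xs ! min (k * 0) m = x0" using xs by (simp add: pseudoorbits_def)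
    show "dist (id (xs ! min (k * j) m)) (xs ! min (k * Suc j) m) \<le> real k * \<delta>" for j
      using pseudoorbit_id_dist_le_mult[OF xs \<open>0 \<le> \<delta>\<close>] by simp
  qed
next
  fix xs ys i assume xs: "xs \<in> pseudoorbits id m \<delta> x0" and ys: "ys \<in> pseudoorbits id m \<delta> x0"
    and "i \<le> m"
  define j where "j = i div k"
  have j: "k * j \<le> i" "i - k * j \<le> k" "j \<le> m div k + 1"
    using \<open>1 \<le> k\<close> \<open>i \<le> m\<close> div_le_mono[OF \<open>i \<le> m\<close>, of k]
    by (auto simp: j_def minus_mod_eq_mult_div[symmetric] less_imp_le)
  have close: "dist (zs ! (k * j)) (zs ! i) \<le> real k * \<delta>" if "zs \<in> pseudoorbits id m \<delta> x0" for zs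
    using pseudoorbit_id_dist_le_mult[OF that \<open>0 \<le> \<delta>\<close> j(1) \<open>i \<le> m\<close> j(2)] .
  have "dist (xs ! i) (ys ! i) \<le> dist (xs ! (k * j)) (xs ! i) + dist (xs ! (k * j)) (ys ! i)"
    by (rule dist_triangle3)
  moreover have "dist (xs ! (k * j)) (ys ! i) \<le> dist (xs ! (k * j)) (ys ! (k * j)) + dist (ys ! (k * j)) (ys ! i)"
    by (rule dist_triangle)
  ultimately have "dist (xs ! i) (ys ! i) - 2 * real k * \<delta> \<le> dist (xs ! (k * j)) (ys ! (k * j))"
    using close[OF xs] close[OF ys] by linarith
  moreover have "min (k * j) m = k * j" using j(1) \<open>i \<le> m\<close> by simp
  ultimately show "\<exists>j'\<le>m div k + 1. dist (xs ! i) (ys ! i) - 2 * real k * \<delta>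
      \<le> dist (map (\<lambda>j. xs ! min (k * j) m) [0..<Suc (m div k + 1)] ! j')
              (map (\<lambda>j. ys ! min (k * j) m) [0..<Suc (m div k + 1)] ! j')"
    using j(3) by (intro exI[of _ j]) (simp add: nth_map_upt del: upt_Suc)
qed (use assms in auto)

lemma isometry_funpow:
  fixes f :: "'a::metric_space \<Rightarrow> 'a"
  assumes "\<forall>x y. dist (f x) (f y) = dist x y"
  shows "dist ((f ^^ k) a) ((f ^^ k) b) = dist a b"
  using assms by (induction k) auto

lemma sep_num_id_le_isometry:
  assumes iso: "\<forall>x y. dist (f x) (f y) = dist x y"
  shows "sep_num id n R \<delta> x0 \<le> sep_num f n R \<delta> x0"
proof (rule sep_num_le_by_map[where g="\<lambda>ys. map (\<lambda>i. (f ^^ i) (ys ! i)) [0..<Suc n]" and c=0])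
  fix ys assume ys: "ys \<in> pseudoorbits id n \<delta> x0"
  show "map (\<lambda>i. (f ^^ i) (ys ! i)) [0..<Suc n] \<in> pseudoorbits f n \<delta> x0"
  proof (rule map_in_pseudoorbits)
    show "(f ^^ 0) (ys ! 0) = x0" using ys by (simp add: pseudoorbits_def)
    fix i assume "i < n"
    have "dist (f ((f ^^ i) (ys ! i))) ((f ^^ Suc i) (ys ! Suc i)) = dist (ys ! i) (ys ! Suc i)"
      using isometry_funpow[OF iso, of "Suc i"] by simp
    also have "\<dots> \<le> \<delta>" using ys \<open>i < n\<close> by (simp add: pseudoorbits_def)
    finally show "dist (f ((f ^^ i) (ys ! i))) ((f ^^ Suc i) (ys ! Suc i)) \<le> \<delta>" .
  qed
next
  fix xs ys i assume "i \<le> n"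
  then show "\<exists>j\<le>n. dist (xs ! i) (ys ! i) - 0 \<le> dist (map (\<lambda>i. (f ^^ i) (xs ! i)) [0..<Suc n] ! j)
      (map (\<lambda>i. (f ^^ i) (ys ! i)) [0..<Suc n] ! j)"
    by (intro exI[of _ i]) (simp add: nth_map_upt isometry_funpow[OF iso] del: upt_Suc)
qed simp_all

text \<open>An \<open>f\<close>-pseudoorbit \<open>(x\<^sub>0, \<dots>, x\<^sub>N)\<close> is unfolded into the sequence
  \<open>x\<^sub>0, f x\<^sub>0, \<dots>, f\<^sup>N x\<^sub>0, f\<^sup>N\<^sup>-\<^sup>1 x\<^sub>1, \<dots>, f x\<^sub>N\<^sub>-\<^sub>1, x\<^sub>N\<close>; for an isometry its jumps are
  \<open>d(x\<^sub>0, f x\<^sub>0)\<close> on the first half and \<open>d(f x\<^sub>j, x\<^sub>j\<^sub>+\<^sub>1)\<close> on the second.\<close>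
definition unfold_pseudoorbit :: "('a \<Rightarrow> 'a) \<Rightarrow> nat \<Rightarrow> 'a list \<Rightarrow> 'a list" where
  "unfold_pseudoorbit f N xs =
     map (\<lambda>i. if i \<le> N then (f ^^ i) (xs ! 0) else (f ^^ (2 * N - i)) (xs ! (i - N))) [0..<Suc (2 * N)]"

lemma nth_unfold_pseudoorbit:
  assumes "N \<le> i" "i \<le> 2 * N"
  shows "unfold_pseudoorbit f N xs ! i = (f ^^ (2 * N - i)) (xs ! (i - N))"
  using assms by (cases "i = N") (simp_all add: unfold_pseudoorbit_def nth_map_upt del: upt_Suc)

lemma unfold_pseudoorbit_in_pseudoorbits_id:
  fixes f :: "'a::metric_space \<Rightarrow> 'a"
  assumes iso: "\<forall>x y. dist (f x) (f y) = dist x y" and xs: "xs \<in> pseudoorbits f N \<delta> x0"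
  shows "unfold_pseudoorbit f N xs \<in> pseudoorbits id (2 * N) (max \<delta> (dist x0 (f x0))) x0"
proof -
  have x0: "xs ! 0 = x0" using xs by (simp add: pseudoorbits_def)
  let ?ys = "unfold_pseudoorbit f N xs"
  have "dist (?ys ! i) (?ys ! Suc i) \<le> max \<delta> (dist x0 (f x0))" if "i < 2 * N" for i
  proof (cases "i < N")
    case True
    then have "dist (?ys ! i) (?ys ! Suc i) = dist ((f ^^ i) x0) ((f ^^ i) (f x0))"
      using that x0 by (simp add: unfold_pseudoorbit_def nth_map_upt funpow_Suc_right del: upt_Suc funpow.simps)
    then show ?thesis by (simp add: isometry_funpow[OF iso])
  next
    case False
    define m where "m = 2 * N - Suc i"
    have "2 * N - i = Suc m" using that by (simp add: m_def)
    then have "dist (?ys ! i) (?ys ! Suc i) = dist ((f ^^ m) (f (xs ! (i - N)))) ((f ^^ m) (xs ! Suc (i - N)))"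
      using False that
      by (simp add: nth_unfold_pseudoorbit m_def Suc_diff_le funpow_Suc_right del: funpow.simps)
    also have "\<dots> \<le> \<delta>"
      using xs False that by (simp add: isometry_funpow[OF iso] pseudoorbits_def)
    finally show ?thesis by simp
  qed
  moreover have "?ys ! 0 = x0"
    using x0 by (simp add: unfold_pseudoorbit_def nth_map_upt del: upt_Suc)
  ultimately show ?thesis
    unfolding pseudoorbits_def by (simp add: unfold_pseudoorbit_def del: upt_Suc)
qed

lemma sep_num_isometry_le_id:
  assumes iso: "\<forall>x y. dist (f x) (f y) = dist x y"
  shows "sep_num f N R \<delta> x0 \<le> sep_num id (2 * N) R (max \<delta> (dist x0 (f x0))) x0"
proof (rule sep_num_le_by_map[where g="unfold_pseudoorbit f N" and c=0])
  show "unfold_pseudoorbit f N xs \<in> pseudoorbits id (2 * N) (max \<delta> (dist x0 (f x0))) x0"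
    if "xs \<in> pseudoorbits f N \<delta> x0" for xs
    using iso that by (rule unfold_pseudoorbit_in_pseudoorbits_id)
  show "\<exists>j\<le>2 * N. dist (xs ! i) (ys ! i) - 0 \<le> dist (unfold_pseudoorbit f N xs ! j) (unfold_pseudoorbit f N ys ! j)"
    if "i \<le> N" for xs ys i
    using that by (intro exI[of _ "N + i"]) (simp add: nth_unfold_pseudoorbit isometry_funpow[OF iso])
qed simp_all

lemma growth_rate_id_rescale:
  assumes "0 \<le> \<delta>" "1 \<le> k" "0 < R"
  shows "ereal (real k) * growth_rate id x0 (R + 2 * real k * \<delta>) \<delta> \<le> growth_rate id x0 R (real k * \<delta>)"
proof -
  have "growth_rate id x0 (R + 2 * real k * \<delta>) \<delta> \<le> ereal (1 / real k) * growth_rate id x0 R (real k * \<delta>)"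
  proof (rule growth_rate_le_reparam[where \<phi>="\<lambda>m. m div k + 1" and d=1])
    show "sep_num id m (R + 2 * real k * \<delta>) \<delta> x0 \<le> sep_num id (m div k + 1) R (real k * \<delta>) x0" for m
      using assms by (rule sep_num_id_sample)
    show "filterlim (\<lambda>m. m div k + 1) sequentially sequentially"
      unfolding filterlim_at_top
    proof
      fix Z
      have "Z \<le> m div k + 1" if "Z * k \<le> m" for m
        using that \<open>1 \<le> k\<close> less_eq_div_iff_mult_less_eq[of k Z m] by simp
      then show "\<forall>\<^sub>F m in sequentially. Z \<le> m div k + 1"
        using eventually_ge_at_top[of "Z * k"] by (rule eventually_mono[rotated])
    qed
    show "real (m div k + 1) \<le> 1 / real k * real m + 1" for m
      using of_nat_div_le_of_nat[of m k] by (simp add: divide_inverse mult.commute)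
  qed (use \<open>1 \<le> k\<close> in simp)
  then have "ereal (real k) * growth_rate id x0 (R + 2 * real k * \<delta>) \<delta>
      \<le> ereal (real k) * (ereal (1 / real k) * growth_rate id x0 R (real k * \<delta>))"
    by (rule ereal_mult_left_mono) simp
  also have "\<dots> = growth_rate id x0 R (real k * \<delta>)"
    using \<open>1 \<le> k\<close> by (simp add: mult.assoc[symmetric])
  finally show ?thesis .
qed

lemma entropy_at_scale_id_rescale:
  assumes "0 \<le> \<delta>" "1 \<le> k"
  shows "ereal (real k) * entropy_at_scale id x0 \<delta> \<le> entropy_at_scale id x0 (real k * \<delta>)"
  unfolding entropy_at_scale_def[of id x0 "real k * \<delta>"]
proof (rule INF_greatest)
  fix R
  have "ereal (real k) * entropy_at_scale id x0 \<delta> \<le> ereal (real k) * growth_rate id x0 (max R 1 + 2 * real k * \<delta>) \<delta>"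
    unfolding entropy_at_scale_def by (intro ereal_mult_left_mono INF_lower) auto
  also have "\<dots> \<le> growth_rate id x0 (max R 1) (real k * \<delta>)"
    using assms by (intro growth_rate_id_rescale) auto
  also have "\<dots> \<le> growth_rate id x0 R (real k * \<delta>)"
    by (intro growth_rate_mono sep_num_anti_R) simp
  finally show "ereal (real k) * entropy_at_scale id x0 \<delta> \<le> growth_rate id x0 R (real k * \<delta>)" .
qed

lemma coarse_entropy_id_eq_0_or_infinity:
  "coarse_entropy id x0 = 0 \<or> coarse_entropy id x0 = \<infinity>"
proof (cases "\<forall>\<delta>. entropy_at_scale id x0 \<delta> = 0")
  case True
  then show ?thesis by (simp add: coarse_entropy_eq_SUP)
next
  case False
  then obtain \<delta> where "entropy_at_scale id x0 \<delta> \<noteq> 0" by blast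
  then have "0 < entropy_at_scale id x0 (max \<delta> 0)"
    using entropy_at_scale_mono[of \<delta> "max \<delta> 0" id x0] entropy_at_scale_nonneg[of id x0 \<delta>] by simp
  moreover have "ereal (real k) * entropy_at_scale id x0 (max \<delta> 0) \<le> coarse_entropy id x0" for k
  proof (cases "k = 0")
    case False
    then have "ereal (real k) * entropy_at_scale id x0 (max \<delta> 0) \<le> entropy_at_scale id x0 (real k * max \<delta> 0)"
      by (intro entropy_at_scale_id_rescale) auto
    also have "\<dots> \<le> coarse_entropy id x0"
      unfolding coarse_entropy_eq_SUP by (rule SUP_upper) simp
    finally show ?thesis .
  qed (simp add: coarse_entropy_nonneg flip: zero_ereal_def)
  ultimately show ?thesis by (simp add: ereal_infinite_if_multiples_le)
qed

lemma coarse_entropy_id_le_isometry: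
  assumes "\<forall>x y. dist (f x) (f y) = dist x y"
  shows "coarse_entropy id x0 \<le> coarse_entropy f x0"
  unfolding coarse_entropy_eq_SUP entropy_at_scale_def
  by (intro SUP_mono' INF_mono' growth_rate_mono sep_num_id_le_isometry assms)

lemma coarse_entropy_isometry_le_id:
  fixes f :: "'a::metric_space \<Rightarrow> 'a"
  assumes iso: "\<forall>x y. dist (f x) (f y) = dist x y"
  shows "coarse_entropy f x0 \<le> 2 * coarse_entropy id x0"
  unfolding coarse_entropy_eq_SUP[of f]
proof (rule SUP_least)
  fix \<delta>
  define \<delta>' where "\<delta>' = max \<delta> (dist x0 (f x0))"
  have "growth_rate f x0 R \<delta> \<le> ereal 2 * growth_rate id x0 R \<delta>'" for R
  proof (rule growth_rate_le_reparam[where \<phi>="\<lambda>m. 2 * m" and d=0])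
    show "sep_num f m R \<delta> x0 \<le> sep_num id (2 * m) R \<delta>' x0" for m
      unfolding \<delta>'_def using iso by (rule sep_num_isometry_le_id)
  qed (auto intro: filterlim_subseq simp: strict_mono_def)
  then have "entropy_at_scale f x0 \<delta> \<le> (INF R. ereal 2 * growth_rate id x0 R \<delta>')"
    unfolding entropy_at_scale_def by (rule INF_mono')
  also have "\<dots> = ereal 2 * entropy_at_scale id x0 \<delta>'"
    unfolding entropy_at_scale_def by (rule INF_ereal_mult_left) simp
  also have "\<dots> \<le> 2 * coarse_entropy id x0"
    unfolding coarse_entropy_eq_SUP numeral_eq_ereal by (intro ereal_mult_left_mono SUP_upper) auto
  finally show "entropy_at_scale f x0 \<delta> \<le> 2 * coarse_entropy id x0" .
qed

theorem mainTheorem5: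
  fixes x0 :: "'a::metric_space"
  shows "(space_coarse_entropy x0 = 0 \<or> space_coarse_entropy x0 = \<infinity>) \<and>
         (\<forall>f::'a \<Rightarrow> 'a. (\<forall>x y. dist (f x) (f y) = dist x y) \<longrightarrow>
              coarse_entropy f x0 = 0 \<or> coarse_entropy f x0 = \<infinity>)"
proof (intro conjI allI impI)
  show "space_coarse_entropy x0 = 0 \<or> space_coarse_entropy x0 = \<infinity>"
    unfolding space_coarse_entropy_def by (rule coarse_entropy_id_eq_0_or_infinity)
  fix f :: "'a \<Rightarrow> 'a"
  assume iso: "\<forall>x y. dist (f x) (f y) = dist x y"
  from coarse_entropy_id_eq_0_or_infinity[of x0]
  show "coarse_entropy f x0 = 0 \<or> coarse_entropy f x0 = \<infinity>"
  proof
    assume "coarse_entropy id x0 = 0"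
    then show ?thesis
      using coarse_entropy_isometry_le_id[OF iso, of x0] coarse_entropy_nonneg[of f x0] by simp
  next
    assume "coarse_entropy id x0 = \<infinity>"
    then show ?thesis using coarse_entropy_id_le_isometry[OF iso, of x0] by simp
  qed
qed

end
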